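(* Let $X$ be a topological space. If \textsc{Alice} does not have a winning strategy in the game $\mathsf{BM}_\omega(X)$, then $X$ is a Baire space.
   Context: The game $\mathsf{BM}_\omega(X)$ on a topological space $X$ is played by \textsc{Alice} and \textsc{Bob} as follows. \textsc{Alice} plays a non-empty open set $A_0$; \textsc{Bob} plays a countable collection $\mathcal{B}_0$ of non-empty open subsets of $A_0$. In inning $n+1$, for each $B \in \mathcal{B}_n$ \textsc{Alice} plays a non-empty open set $A_B \subseteq B$; let $\mathcal{A}_{n+1}=\{A_B : B\in\mathcal{B}_n\}$; then \textsc{Bob} plays a countable collection $\mathcal{B}_{n+1}$ of non-empty open subsets of $\bigcup\mathcal{A}_{n+1}$. Put $B_n=\bigcup\mathcal{B}_n$. \textsc{Bob} wins the play if $\bigcap_{n\in\omega}B_n\neq\emptyset$; otherwise \textsc{Alice} wins. A Baire space is a space in which countable intersections of dense open sets are dense. *)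

theory Defs
  imports "HOL-Analysis.Analysis"
begin

text \<open>A Baire space: countable intersections of dense open sets are dense.
  (The intersection is taken inside the topspace, so the empty family gives the whole space.)\<close>
definition Baire_space :: "'a topology \<Rightarrow> bool" where
  "Baire_space X \<longleftrightarrow>
     (\<forall>\<U>. countable \<U> \<and> (\<forall>U\<in>\<U>. openin X U \<and> X closure_of U = topspace X)
        \<longrightarrow> X closure_of (topspace X \<inter> \<Inter>\<U>) = topspace X)"

text \<open>A strategy of Alice consists of her first move a0 and a
  function sigma: given the history [B_0, ..., B_n] of Bob's moves so far and a set B in B_n,
  sigma returns Alice's answer A_B. (Alice's own previous moves are determined by the
  strategy and Bob's moves, so the history of Bob's moves is the full information.)\<close>

definition alice_strategy ::
  "'a topology \<Rightarrow> 'a set \<Rightarrow> ('a set set list \<Rightarrow> 'a set \<Rightarrow> 'a set) \<Rightarrow> bool" where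
  "alice_strategy X a0 \<sigma> \<longleftrightarrow>
     openin X a0 \<and> a0 \<noteq> {} \<and>
     (\<forall>h B. openin X B \<and> B \<noteq> {} \<longrightarrow> openin X (\<sigma> h B) \<and> \<sigma> h B \<noteq> {} \<and> \<sigma> h B \<subseteq> B)"

definition bob_move :: "'a topology \<Rightarrow> 'a set \<Rightarrow> 'a set set \<Rightarrow> bool" where
  "bob_move X S \<B> \<longleftrightarrow> countable \<B> \<and> (\<forall>B\<in>\<B>. openin X B \<and> B \<noteq> {} \<and> B \<subseteq> S)"

definition play_against ::
  "'a topology \<Rightarrow> 'a set \<Rightarrow> ('a set set list \<Rightarrow> 'a set \<Rightarrow> 'a set) \<Rightarrow> (nat \<Rightarrow> 'a set set) \<Rightarrow> bool" where
  "play_against X a0 \<sigma> \<B>s \<longleftrightarrow>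
     bob_move X a0 (\<B>s 0) \<and>
     (\<forall>n. bob_move X (\<Union> (\<sigma> (map \<B>s [0..<Suc n]) ` \<B>s n)) (\<B>s (Suc n)))"

definition alice_winning_strategy ::
  "'a topology \<Rightarrow> 'a set \<Rightarrow> ('a set set list \<Rightarrow> 'a set \<Rightarrow> 'a set) \<Rightarrow> bool" where
  "alice_winning_strategy X a0 \<sigma> \<longleftrightarrow>
     alice_strategy X a0 \<sigma> \<and>
     (\<forall>\<B>s. play_against X a0 \<sigma> \<B>s \<longrightarrow> (\<Inter>n. \<Union>(\<B>s n)) = {})"

end

theory Submission
  imports Defs
begin

text \<open>If \<open>X\<close> is not Baire, there are dense open sets \<open>U\<^sub>0, U\<^sub>1, \<dots>\<close> and a non-empty
  open \<open>W\<close> missing their intersection. Alice opens with \<open>W\<close> and in inning \<open>n + 1\<close> answers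
  each \<open>B\<close> by \<open>B \<inter> U\<^sub>n\<close>, which is non-empty by density. Then \<open>B\<^sub>0 \<subseteq> W\<close> and
  \<open>B\<^sub>n\<^sub>+\<^sub>1 \<subseteq> U\<^sub>n\<close>, so Bob's intersection is empty.\<close>

lemma not_Baire_spaceE:
  assumes "\<not> Baire_space X"
  obtains U :: "nat \<Rightarrow> 'a set" and W
  where "\<And>n. openin X (U n)" "\<And>n. X closure_of U n = topspace X"
    and "openin X W" "W \<noteq> {}" "W \<inter> (\<Inter>n. U n) = {}"
proof -
  obtain \<U> where "countable \<U>" and dense_open: "\<forall>U\<in>\<U>. openin X U \<and> X closure_of U = topspace X"
    and not_dense: "X closure_of (topspace X \<inter> \<Inter>\<U>) \<noteq> topspace X"
    using assms unfolding Baire_space_def by blast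
  from not_dense obtain W where W: "openin X W" "W \<noteq> {}" "topspace X \<inter> \<Inter>\<U> \<inter> W = {}"
    unfolding dense_intersects_open by blast
  have "\<U> \<noteq> {}"
    using not_dense by auto
  define U where "U = from_nat_into \<U>"
  have U_in: "U n \<in> \<U>" for n
    unfolding U_def using \<open>\<U> \<noteq> {}\<close> by (rule from_nat_into)
  have "range U = \<U>"
    unfolding U_def using \<open>countable \<U>\<close> \<open>\<U> \<noteq> {}\<close> by simp
  moreover have "W \<subseteq> topspace X"
    using W(1) openin_subset by blast
  ultimately have "W \<inter> (\<Inter>n. U n) = {}"
    using W(3) by blast
  moreover have "openin X (U n)" "X closure_of U n = topspace X" for n
    using dense_open U_in by blast+
  ultimately show thesis
    using that W(1,2) by blast
qed

lemma play_against_Union_subset: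
  assumes "play_against X a0 \<sigma> \<B>s"
  shows "\<Union>(\<B>s 0) \<subseteq> a0"
    and "\<Union>(\<B>s (Suc n)) \<subseteq> \<Union>(\<sigma> (map \<B>s [0..<Suc n]) ` \<B>s n)"
  using assms unfolding play_against_def bob_move_def by blast+

text \<open>The history handed to Alice in inning \<open>n + 1\<close> has length \<open>n + 1\<close>.\<close>

definition intersecting_strategy :: "(nat \<Rightarrow> 'a set) \<Rightarrow> 'a set set list \<Rightarrow> 'a set \<Rightarrow> 'a set"
  where "intersecting_strategy U h B = B \<inter> U (length h - 1)"

lemma alice_strategy_intersecting_strategy:
  assumes "\<And>n. openin X (U n)" "\<And>n. X closure_of U n = topspace X"
    and "openin X W" "W \<noteq> {}"
  shows "alice_strategy X W (intersecting_strategy U)"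
  using assms unfolding alice_strategy_def intersecting_strategy_def dense_intersects_open
  by (auto simp: inf_commute)

lemma play_against_intersecting_strategy_Inter:
  assumes "play_against X W (intersecting_strategy U) \<B>s"
  shows "(\<Inter>n. \<Union>(\<B>s n)) \<subseteq> W \<inter> (\<Inter>n. U n)"
proof -
  have "\<Union>(\<B>s (Suc n)) \<subseteq> U n" for n
    using play_against_Union_subset(2)[OF assms, of n]
    unfolding intersecting_strategy_def by auto
  then show ?thesis
    using play_against_Union_subset(1)[OF assms] by blast
qed

theorem proposition3p2:
  fixes X :: "'a topology"
  assumes "\<not> (\<exists>a0 \<sigma>. alice_winning_strategy X a0 \<sigma>)"
  shows "Baire_space X"
proof (rule ccontr)
  assume "\<not> Baire_space X"
  then show False
  proof (rule not_Baire_spaceE)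
    fix U :: "nat \<Rightarrow> 'a set" and W
    assume U: "\<And>n. openin X (U n)" "\<And>n. X closure_of U n = topspace X"
      and W: "openin X W" "W \<noteq> {}" and W_disjoint: "W \<inter> (\<Inter>n. U n) = {}"
    from U W have "alice_strategy X W (intersecting_strategy U)"
      by (rule alice_strategy_intersecting_strategy)
    moreover have "(\<Inter>n. \<Union>(\<B>s n)) = {}" if "play_against X W (intersecting_strategy U) \<B>s" for \<B>s
      using play_against_intersecting_strategy_Inter[OF that] W_disjoint by blast
    ultimately have "alice_winning_strategy X W (intersecting_strategy U)"
      unfolding alice_winning_strategy_def by blast
    with assms show False
      by blast
  qed
qed

end
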